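(* Let $\omega$ be a weight function. Then: (a) all Hermite functions $H_\gamma$, $\gamma\in\mathbb N_0^d$, belong to $\mathcal S_{\{\omega\}}(\mathbb R^d)$ if and only if $\omega(t)=O(t^2)$ as $t\to+\infty$; (b) all Hermite functions $H_\gamma$, $\gamma\in\mathbb N_0^d$, belong to $\mathcal S_{(\omega)}(\mathbb R^d)$ if and only if $\omega(t)=o(t^2)$ as $t\to+\infty$.
   Context: A weight function is a continuous increasing function $\omega:[0,+\infty)\to[0,+\infty)$ such that: ($\alpha$) there is $L\ge1$ with $\omega(2t)\le L(\omega(t)+1)$ for all $t\ge0$; ($\beta$) $\omega(t)=O(t^2)$ as $t\to+\infty$; ($\gamma$) $\log t=o(\omega(t))$ as $t\to+\infty$; ($\delta$) $\varphi_\omega(t):=\omega(e^t)$ is convex on $[0,+\infty)$. For $t\in\mathbb R^d$ one sets $\omega(t):=\omega(|t|)$. The Young conjugate is $\varphi_\omega^*(s):=\sup_{t\ge0}\{ts-\varphi_\omega(t)\}$. For $\lambda>0$, $\alpha\in\mathbb N_0^d$, $W^{(\lambda)}_\alpha:=e^{\frac1\lambda\varphi^*_\omega(\lambda|\alpha|)}$ and $\|f\|_{\infty,\mathbf W^{(\lambda)}}:=\sup_{\alpha,\beta\in\mathbb N_0^d}\frac{\|x^\alpha\partial^\beta f\|_\infty}{W^{(\lambda)}_{\alpha+\beta}}$. $\mathcal S_{\{\omega\}}(\mathbb R^d)$ is the set of $f\in C^\infty(\mathbb R^d)$ with $\|f\|_{\infty,\mathbf W^{(\lambda)}}<\infty$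 for some $\lambda>0$; $\mathcal S_{(\omega)}(\mathbb R^d)$ is the set with $\|f\|_{\infty,\mathbf W^{(\lambda)}}<\infty$ for all $\lambda>0$. Hermite functions: $H_\gamma(x)=(2^{|\gamma|}\gamma!\pi^{d/2})^{-1/2}h_\gamma(x)e^{-|x|^2/2}$, with $h_\gamma(x)=(-1)^{|\gamma|}e^{|x|^2}\partial^\gamma e^{-|x|^2}$. *)

theory Defs
  imports "HOL-Analysis.Analysis" "HOL-Library.Landau_Symbols"
begin

definition weight_function :: "(real \<Rightarrow> real) \<Rightarrow> bool" where
  "weight_function \<omega> \<longleftrightarrow>
     continuous_on {0..} \<omega> \<and> mono_on {0..} \<omega> \<and> (\<forall>t\<ge>0. \<omega> t \<ge> 0) \<and>
     (\<exists>L\<ge>1. \<forall>t\<ge>0. \<omega> (2 * t) \<le> L * (\<omega> t + 1)) \<and>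
     \<omega> \<in> O[at_top](\<lambda>t. t\<^sup>2) \<and>
     (\<lambda>t. ln t) \<in> o[at_top](\<omega>) \<and>
     convex_on {0..} (\<lambda>t. \<omega> (exp t))"

definition phi_star :: "(real \<Rightarrow> real) \<Rightarrow> real \<Rightarrow> real" where
  "phi_star \<omega> s = (SUP t\<in>{0..}. t * s - \<omega> (exp t))"

text \<open>Multi-indices in N_0^d are functions 'n => nat; |alpha| is the sum of entries.\<close>
definition mlen :: "('n::finite \<Rightarrow> nat) \<Rightarrow> nat" where
  "mlen \<alpha> = (\<Sum>i\<in>UNIV. \<alpha> i)"

definition Wseq :: "(real \<Rightarrow> real) \<Rightarrow> real \<Rightarrow> ('n::finite \<Rightarrow> nat) \<Rightarrow> real" where
  "Wseq \<omega> lam \<alpha> = exp ((1 / lam) * phi_star \<omega> (lam * real (mlen \<alpha>)))"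

definition partial :: "'n::finite \<Rightarrow> (real^'n \<Rightarrow> real) \<Rightarrow> real^'n \<Rightarrow> real" where
  "partial i f x = deriv (\<lambda>t. f (x + t *\<^sub>R axis i 1)) 0"

definition iter_partial :: "'n::finite list \<Rightarrow> (real^'n \<Rightarrow> real) \<Rightarrow> real^'n \<Rightarrow> real" where
  "iter_partial xs f = foldr partial xs f"

definition smooth_fun :: "(real^'n::finite \<Rightarrow> real) \<Rightarrow> bool" where
  "smooth_fun f \<longleftrightarrow> (\<forall>xs. continuous_on UNIV (iter_partial xs f) \<and>
       (\<forall>i x. (\<lambda>t. iter_partial xs f (x + t *\<^sub>R axis i 1)) differentiable (at 0)))"

text \<open>partial^beta f: differentiate beta i times in direction i (order irrelevant for smooth f).\<close>
definition mpartial :: "('n::finite \<Rightarrow> nat) \<Rightarrow> (real^'n \<Rightarrow> real) \<Rightarrow> real^'n \<Rightarrow> real" where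
  "mpartial \<beta> f = iter_partial (SOME xs. \<forall>i. count_list xs i = \<beta> i) f"

definition mpow :: "real^'n::finite \<Rightarrow> ('n \<Rightarrow> nat) \<Rightarrow> real" where
  "mpow x \<alpha> = (\<Prod>i\<in>UNIV. (x $ i) ^ \<alpha> i)"

definition W_norm_finite :: "(real \<Rightarrow> real) \<Rightarrow> real \<Rightarrow> (real^'n::finite \<Rightarrow> real) \<Rightarrow> bool" where
  "W_norm_finite \<omega> lam f \<longleftrightarrow>
     (\<exists>C. \<forall>\<alpha> \<beta> x. \<bar>mpow x \<alpha> * mpartial \<beta> f x\<bar> \<le> C * Wseq \<omega> lam (\<lambda>i. \<alpha> i + \<beta> i))"

definition S_roumieu :: "(real \<Rightarrow> real) \<Rightarrow> (real^'n::finite \<Rightarrow> real) set" where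
  "S_roumieu \<omega> = {f. smooth_fun f \<and> (\<exists>lam>0. W_norm_finite \<omega> lam f)}"

definition S_beurling :: "(real \<Rightarrow> real) \<Rightarrow> (real^'n::finite \<Rightarrow> real) set" where
  "S_beurling \<omega> = {f. smooth_fun f \<and> (\<forall>lam>0. W_norm_finite \<omega> lam f)}"

definition hermite_poly :: "('n::finite \<Rightarrow> nat) \<Rightarrow> real^'n \<Rightarrow> real" where
  "hermite_poly \<gamma> x = (-1) ^ mlen \<gamma> * exp ((norm x)\<^sup>2) *
       mpartial \<gamma> (\<lambda>y. exp (- (norm y)\<^sup>2)) x"

definition hermite_fun :: "('n::finite \<Rightarrow> nat) \<Rightarrow> real^'n \<Rightarrow> real" where
  "hermite_fun \<gamma> x =
     (2 ^ mlen \<gamma> * (\<Prod>i\<in>UNIV. fact (\<gamma> i)) * pi powr (real CARD('n) / 2)) powr (-1/2)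
     * hermite_poly \<gamma> x * exp (- (norm x)\<^sup>2 / 2)"

end

theory Submission
  imports Defs "HOL-Library.Multiset"
begin

text \<open>
  One half of (a) is free, since omega(t) = O(t^2) is an axiom of weight functions.
  Every Hermite function, and every derivative of one, is P(x) exp(-|x|^2/2) with P a
  polynomial. Weighting a monomial c x^mu by |c| sqrt(m^m), m = |mu| + k, and using
  r^m exp(-r^2/2) <= sqrt(m^m) yields |x^alpha d^beta H(x)| <= C 2^n sqrt((D+n)^(D+n)),
  where n = |alpha + beta| and D is the degree of P. On the other side, the definition
  of phi* gives W_alpha >= r^|alpha| exp(-omega(r)/lambda) for every r >= 1; when
  omega(r) <= K r^2 + K' with K/lambda small, the choice r^2 ~ n makes this dominate the
  previous bound. O(t^2) provides one such lambda, o(t^2) makes every lambda work.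

  Conversely, testing H_0 = c exp(-|x|^2/2) against x_i^n on a coordinate axis gives
  c u^n exp(-u^2/2) <= C W_n for all n and u. Choosing lambda n close to the slope s of a
  supporting line of the convex function phi(t) = omega(e^t) at log u makes phi*(lambda n)
  at most s log u - omega(u), whence omega(u) <= lambda (u^2/2 + log u + const); since
  lambda is arbitrary, omega = o(t^2).
\<close>

section \<open>Polynomials times Gaussians\<close>

text \<open>A polynomial is a list of monomials (c, mu) standing for c x^mu; repetitions are allowed.\<close>

type_synonym 'n monomials = "(real \<times> ('n \<Rightarrow> nat)) list"

definition poly_eval :: "'n::finite monomials \<Rightarrow> real^'n \<Rightarrow> real" where
  "poly_eval P x = (\<Sum>m\<leftarrow>P. fst m * mpow x (snd m))"

definition gauss_poly :: "real \<Rightarrow> 'n::finite monomials \<Rightarrow> real^'n \<Rightarrow> real" where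
  "gauss_poly a P x = poly_eval P x * exp (- a * (norm x)\<^sup>2)"

definition poly_scale :: "real \<Rightarrow> 'n monomials \<Rightarrow> 'n monomials" where
  "poly_scale c P = map (\<lambda>m. (c * fst m, snd m)) P"

definition poly_partial :: "'n \<Rightarrow> 'n monomials \<Rightarrow> 'n monomials" where
  "poly_partial i P = map (\<lambda>m. (fst m * real (snd m i), (snd m)(i := snd m i - 1))) P"

definition poly_mult_coord :: "'n \<Rightarrow> 'n monomials \<Rightarrow> 'n monomials" where
  "poly_mult_coord i P = map (\<lambda>m. (fst m, (snd m)(i := snd m i + 1))) P"

text \<open>d_i (P(x) exp(-a|x|^2)) = (d_i P(x) - 2 a x_i P(x)) exp(-a|x|^2)\<close>

definition gauss_poly_partial :: "real \<Rightarrow> 'n \<Rightarrow> 'n monomials \<Rightarrow> 'n monomials" where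
  "gauss_poly_partial a i P = poly_partial i P @ poly_scale (- 2 * a) (poly_mult_coord i P)"

lemma poly_eval_Nil [simp]: "poly_eval [] x = 0"
  by (simp add: poly_eval_def)

lemma poly_eval_Cons [simp]: "poly_eval (m # P) x = fst m * mpow x (snd m) + poly_eval P x"
  by (simp add: poly_eval_def)

lemma poly_eval_append: "poly_eval (P @ Q) x = poly_eval P x + poly_eval Q x"
  by (simp add: poly_eval_def)

lemma poly_eval_scale: "poly_eval (poly_scale c P) x = c * poly_eval P x"
  by (induction P) (simp_all add: poly_scale_def algebra_simps)

lemma mpow_eq_component_times_rest:
  "mpow x \<mu> = x $ i ^ \<mu> i * (\<Prod>j\<in>UNIV - {i}. x $ j ^ \<mu> j)"
  unfolding mpow_def by (simp add: prod.remove)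

lemma mpow_fun_upd: "mpow x (\<mu>(i := k)) = x $ i ^ k * (\<Prod>j\<in>UNIV - {i}. x $ j ^ \<mu> j)"
  unfolding mpow_def by (subst prod.remove[of _ i]) (auto intro!: prod.cong)

lemma mpow_add: "mpow x \<alpha> * mpow x \<mu> = mpow x (\<lambda>i. \<alpha> i + \<mu> i)"
  by (simp add: mpow_def power_add prod.distrib)

lemma mpow_axis_single:
  fixes u :: real
  shows "mpow (axis i u) (\<lambda>j. if j = i then n else 0) = u ^ n"
proof -
  have "(\<Prod>j\<in>UNIV - {i}. axis i u $ j ^ (if j = i then n else 0)) = 1"
    by (rule prod.neutral) simp
  then show ?thesis
    by (simp add: mpow_eq_component_times_rest[of _ _ i])
qed

lemma poly_eval_mult_coord: "poly_eval (poly_mult_coord i P) x = x $ i * poly_eval P x"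
  by (induction P) (simp_all add: poly_mult_coord_def mpow_fun_upd
      mpow_eq_component_times_rest[of x _ i] algebra_simps)

lemma mpow_has_derivative_along_axis:
  "((\<lambda>t. mpow (x + t *\<^sub>R axis i 1) \<mu>) has_real_derivative
      real (\<mu> i) * mpow x (\<mu>(i := \<mu> i - 1))) (at 0)"
proof -
  let ?rest = "\<Prod>j\<in>UNIV - {i}. x $ j ^ \<mu> j"
  have "mpow (x + t *\<^sub>R axis i 1) \<mu> = (x $ i + t) ^ \<mu> i * ?rest" for t
    by (subst mpow_eq_component_times_rest[of _ _ i]) (auto simp: axis_def intro!: prod.cong)
  moreover have "((\<lambda>t. (x $ i + t) ^ \<mu> i * ?rest) has_real_derivative
      real (\<mu> i) * (x $ i + 0) ^ (\<mu> i - 1) * 1 * ?rest) (at 0)"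
    by (intro derivative_eq_intros) auto
  ultimately show ?thesis
    by (simp add: mpow_fun_upd mult.assoc)
qed

lemma poly_eval_has_derivative_along_axis:
  "((\<lambda>t. poly_eval P (x + t *\<^sub>R axis i 1)) has_real_derivative
      poly_eval (poly_partial i P) x) (at 0)"
proof (induction P)
  case (Cons m P)
  have "((\<lambda>t. fst m * mpow (x + t *\<^sub>R axis i 1) (snd m) + poly_eval P (x + t *\<^sub>R axis i 1))
      has_real_derivative fst m * (real (snd m i) * mpow x ((snd m)(i := snd m i - 1)))
        + poly_eval (poly_partial i P) x) (at 0)"
    by (intro DERIV_add DERIV_cmult mpow_has_derivative_along_axis Cons)
  then show ?case
    by (simp add: poly_partial_def mult.assoc)
qed (simp add: poly_partial_def)

lemma norm_add_axis_squared:
  fixes x :: "real^'n::finite"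
  shows "(norm (x + t *\<^sub>R axis i 1))\<^sup>2 = (norm x)\<^sup>2 + 2 * t * x $ i + t\<^sup>2"
  unfolding power2_norm_eq_inner
  by (simp add: inner_add_left inner_add_right inner_commute
      inner_axis inner_axis_axis power2_eq_square algebra_simps)

lemma gaussian_has_derivative_along_axis:
  "((\<lambda>t. exp (- a * (norm (x + t *\<^sub>R axis i 1))\<^sup>2)) has_real_derivative
      - 2 * a * x $ i * exp (- a * (norm x)\<^sup>2)) (at 0)"
proof -
  have "((\<lambda>t. exp (- a * ((norm x)\<^sup>2 + 2 * t * x $ i + t\<^sup>2))) has_real_derivative
      exp (- a * ((norm x)\<^sup>2 + 2 * 0 * x $ i + 0\<^sup>2)) * (- a * (2 * 1 * x $ i + 2 * 0 ^ 1 * 1))) (at 0)"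
    by (intro derivative_eq_intros) auto
  then show ?thesis
    by (simp add: norm_add_axis_squared algebra_simps)
qed

lemma gauss_poly_has_derivative_along_axis:
  "((\<lambda>t. gauss_poly a P (x + t *\<^sub>R axis i 1)) has_real_derivative
      gauss_poly a (gauss_poly_partial a i P) x) (at 0)"
  using DERIV_mult[OF poly_eval_has_derivative_along_axis gaussian_has_derivative_along_axis]
  by (simp add: gauss_poly_def gauss_poly_partial_def poly_eval_append poly_eval_scale
      poly_eval_mult_coord algebra_simps)

lemma iter_partial_gauss_poly:
  "iter_partial xs (gauss_poly a P) = gauss_poly a (foldr (gauss_poly_partial a) xs P)"
proof (induction xs)
  case (Cons i xs)
  then show ?case
    by (auto simp: iter_partial_def partial_def
        intro!: DERIV_imp_deriv gauss_poly_has_derivative_along_axis)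
qed (simp add: iter_partial_def)

lemma continuous_on_poly_eval: "continuous_on UNIV (poly_eval P)"
proof (induction P)
  case (Cons m P)
  then show ?case
    unfolding poly_eval_Cons mpow_def by (intro continuous_intros)
qed (simp add: continuous_on_const)

lemma smooth_gauss_poly: "smooth_fun (gauss_poly a (P :: 'n::finite monomials))"
  unfolding smooth_fun_def iter_partial_gauss_poly
proof (intro allI conjI)
  fix xs :: "'n list"
  show "continuous_on UNIV (gauss_poly a (foldr (gauss_poly_partial a) xs P))"
    unfolding gauss_poly_def[abs_def] by (intro continuous_intros continuous_on_poly_eval)
  show "(\<lambda>t. gauss_poly a (foldr (gauss_poly_partial a) xs P) (x + t *\<^sub>R axis i 1))
      differentiable at 0" for i x
    using gauss_poly_has_derivative_along_axis real_differentiable_def by blast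
qed

lemma length_eq_sum_count_list: "length xs = (\<Sum>i\<in>(UNIV :: 'n::finite set). count_list xs i)"
proof (induction xs)
  case (Cons a xs)
  have "(\<Sum>i\<in>UNIV. count_list (a # xs) i) = (\<Sum>i\<in>UNIV. count_list xs i + (if a = i then 1 else 0))"
    by (rule sum.cong) auto
  with Cons show ?case
    by (simp add: sum.distrib)
qed simp

lemma mpartial_eq_iter_partial:
  fixes \<beta> :: "'n::finite \<Rightarrow> nat"
  obtains xs where "length xs = mlen \<beta>" "mpartial \<beta> = iter_partial xs"
proof -
  obtain ys where "mset ys = Abs_multiset \<beta>"
    using ex_mset by blast
  then have "\<exists>xs. \<forall>i. count_list xs i = \<beta> i"
    by (metis count_mset count_Abs_multiset finite)
  then have counts: "\<forall>i. count_list (SOME xs. \<forall>i. count_list xs i = \<beta> i) i = \<beta> i"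
    by (rule someI_ex)
  show ?thesis
    by (rule that[of "SOME xs. \<forall>i. count_list xs i = \<beta> i"])
      (simp_all add: mlen_def length_eq_sum_count_list counts mpartial_def fun_eq_iff)
qed

lemma mpartial_zero [simp]: "mpartial (\<lambda>_. 0) f = (f :: real^'n::finite \<Rightarrow> real)"
proof -
  obtain xs :: "'n list" where "length xs = mlen (\<lambda>_::'n. 0::nat)" "mpartial (\<lambda>_. 0) = iter_partial xs"
    using mpartial_eq_iter_partial[of "\<lambda>_::'n. 0"] by blast
  then show ?thesis
    by (simp add: mlen_def iter_partial_def)
qed

lemma hermite_fun_eq_gauss_poly: "\<exists>P. hermite_fun (\<gamma> :: 'n::finite \<Rightarrow> nat) = gauss_poly (1/2) P"
proof -
  obtain xs where xs: "mpartial \<gamma> = iter_partial xs"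
    using mpartial_eq_iter_partial by blast
  define P where "P = foldr (gauss_poly_partial 1) xs [(1, \<lambda>_::'n. 0)]"
  define c where "c = (-1) ^ mlen \<gamma> *
    (2 ^ mlen \<gamma> * (\<Prod>i\<in>UNIV. fact (\<gamma> i)) * pi powr (real CARD('n) / 2)) powr (-1/2)"
  have "(\<lambda>y::real^'n. exp (- (norm y)\<^sup>2)) = gauss_poly 1 [(1, \<lambda>_. 0)]"
    by (simp add: fun_eq_iff gauss_poly_def mpow_def)
  then have "hermite_poly \<gamma> x = (-1) ^ mlen \<gamma> * poly_eval P x" for x
    by (simp add: hermite_poly_def xs P_def iter_partial_gauss_poly gauss_poly_def flip: exp_add)
  then have "hermite_fun \<gamma> x = gauss_poly (1/2) (poly_scale c P) x" for x
    by (simp add: hermite_fun_def gauss_poly_def poly_eval_scale c_def)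
  then show ?thesis
    by blast
qed

lemma hermite_fun_zero:
  "hermite_fun (\<lambda>_::'n::finite. 0) x = pi powr (- real CARD('n) / 4) * exp (- (norm x)\<^sup>2 / 2)"
proof -
  have "hermite_poly (\<lambda>_::'n. 0) x = 1"
    by (simp add: hermite_poly_def mlen_def exp_minus)
  moreover have "(pi powr (real CARD('n) / 2)) powr (-1/2) = pi powr (- real CARD('n) / 4)"
    by (simp add: powr_powr)
  ultimately show ?thesis
    by (simp add: hermite_fun_def mlen_def)
qed

section \<open>Moment bounds\<close>

definition sqrt_pow_self :: "nat \<Rightarrow> real" where
  "sqrt_pow_self m = sqrt (real m ^ m)"

lemma sqrt_pow_self_nonneg: "sqrt_pow_self m \<ge> 0"
  by (simp add: sqrt_pow_self_def)

lemma sqrt_pow_self_mono: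
  assumes "m \<le> k"
  shows "sqrt_pow_self m \<le> sqrt_pow_self k"
proof (cases "k = 0")
  case False
  have "real m ^ m \<le> real k ^ m"
    using assms by (intro power_mono) auto
  also have "\<dots> \<le> real k ^ k"
    using assms False by (intro power_increasing) auto
  finally show ?thesis
    by (simp add: sqrt_pow_self_def)
qed (use assms in simp)

lemma of_nat_mult_sqrt_pow_self_le:
  assumes "k \<le> q + 1"
  shows "real k * sqrt_pow_self q \<le> sqrt_pow_self (q + 2)"
proof -
  have "(real k)\<^sup>2 * real q ^ q \<le> (real q + 2)\<^sup>2 * (real q + 2) ^ q"
    using assms by (intro mult_mono power_mono) auto
  also have "\<dots> = real (q + 2) ^ (q + 2)"
    by (simp add: power_add power2_eq_square mult.commute mult.left_commute add.commute)
  finally have "(real k * sqrt_pow_self q)\<^sup>2 \<le> (sqrt_pow_self (q + 2))\<^sup>2"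
    by (simp add: sqrt_pow_self_def power_mult_distrib)
  then show ?thesis
    by (rule power2_le_imp_le) (simp add: sqrt_pow_self_nonneg)
qed

lemma power_mult_gaussian_le_sqrt_pow_self:
  fixes r :: real
  assumes "r \<ge> 0"
  shows "r ^ m * exp (- r\<^sup>2 / 2) \<le> sqrt_pow_self m"
proof (cases "m = 0")
  case False
  have "r\<^sup>2 / m \<le> exp (r\<^sup>2 / m)"
    using exp_ge_add_one_self[of "r\<^sup>2 / m"] by linarith
  then have "(r\<^sup>2 / m) ^ m \<le> exp (r\<^sup>2 / m) ^ m"
    by (intro power_mono) auto
  also have "\<dots> = exp (r\<^sup>2)"
    using False by (simp flip: exp_of_nat_mult)
  finally have "(r ^ m)\<^sup>2 \<le> (sqrt_pow_self m * exp (r\<^sup>2 / 2))\<^sup>2"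
    using False by (simp add: sqrt_pow_self_def power_divide power_mult_distrib field_simps
        flip: power_mult exp_of_nat_mult)
  then have "r ^ m \<le> sqrt_pow_self m * exp (r\<^sup>2 / 2)"
    by (rule power2_le_imp_le) (simp add: sqrt_pow_self_nonneg)
  then show ?thesis
    by (simp add: exp_minus field_simps)
qed (simp add: sqrt_pow_self_def)

lemma abs_mpow_le: "\<bar>mpow x \<mu>\<bar> \<le> norm x ^ mlen \<mu>"
proof -
  have "\<bar>mpow x \<mu>\<bar> = (\<Prod>i\<in>UNIV. \<bar>x $ i\<bar> ^ \<mu> i)"
    by (simp add: mpow_def abs_prod power_abs)
  also have "\<dots> \<le> (\<Prod>i\<in>UNIV. norm x ^ \<mu> i)"
    by (intro prod_mono conjI power_mono component_le_norm_cart) auto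
  also have "\<dots> = norm x ^ mlen \<mu>"
    by (simp add: mlen_def power_sum)
  finally show ?thesis .
qed

lemma mlen_add: "mlen (\<lambda>i. \<alpha> i + \<mu> i) = mlen \<alpha> + mlen \<mu>"
  by (simp add: mlen_def sum.distrib)

lemma mlen_fun_upd: "mlen (\<mu>(i := k)) + \<mu> i = mlen \<mu> + k"
  unfolding mlen_def by (simp add: sum.remove[of _ i])

lemma component_le_mlen: "\<mu> i \<le> mlen \<mu>"
  unfolding mlen_def by (rule member_le_sum) auto

definition moment_bound :: "nat \<Rightarrow> 'n::finite monomials \<Rightarrow> real" where
  "moment_bound k P = (\<Sum>m\<leftarrow>P. \<bar>fst m\<bar> * sqrt_pow_self (mlen (snd m) + k))"

definition coeff_l1 :: "'n monomials \<Rightarrow> real" where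
  "coeff_l1 P = (\<Sum>m\<leftarrow>P. \<bar>fst m\<bar>)"

definition poly_degree :: "'n::finite monomials \<Rightarrow> nat" where
  "poly_degree P = Max (insert 0 ((\<lambda>m. mlen (snd m)) ` set P))"

lemma moment_bound_Nil [simp]: "moment_bound k [] = 0"
  by (simp add: moment_bound_def)

lemma moment_bound_Cons [simp]:
  "moment_bound k (m # P) = \<bar>fst m\<bar> * sqrt_pow_self (mlen (snd m) + k) + moment_bound k P"
  by (simp add: moment_bound_def)

lemma moment_bound_append: "moment_bound k (P @ Q) = moment_bound k P + moment_bound k Q"
  by (simp add: moment_bound_def)

lemma moment_bound_scale: "moment_bound k (poly_scale c P) = \<bar>c\<bar> * moment_bound k P"
  by (induction P) (simp_all add: poly_scale_def abs_mult algebra_simps)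

lemma abs_mpow_mult_gauss_poly_le:
  "\<bar>mpow x \<alpha> * gauss_poly (1/2) P x\<bar> \<le> moment_bound (mlen \<alpha>) P"
proof (induction P)
  case (Cons m P)
  let ?g = "exp (- (norm x)\<^sup>2 / 2)" and ?x\<mu> = "mpow x (\<lambda>i. snd m i + \<alpha> i)"
  have "\<bar>?x\<mu>\<bar> * ?g \<le> norm x ^ (mlen (snd m) + mlen \<alpha>) * ?g"
    using abs_mpow_le[of x "\<lambda>i. snd m i + \<alpha> i"] by (intro mult_right_mono) (simp_all add: mlen_add)
  also have "\<dots> \<le> sqrt_pow_self (mlen (snd m) + mlen \<alpha>)"
    by (rule power_mult_gaussian_le_sqrt_pow_self) simp
  finally have "\<bar>fst m * (?x\<mu> * ?g)\<bar> \<le> \<bar>fst m\<bar> * sqrt_pow_self (mlen (snd m) + mlen \<alpha>)"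
    by (simp add: abs_mult mult_left_mono)
  moreover have "mpow x \<alpha> * gauss_poly (1/2) (m # P) x
      = fst m * (?x\<mu> * ?g) + mpow x \<alpha> * gauss_poly (1/2) P x"
    by (simp add: gauss_poly_def mpow_add[symmetric] algebra_simps)
  ultimately show ?case
    using Cons abs_triangle_ineq[of "fst m * (?x\<mu> * ?g)" "mpow x \<alpha> * gauss_poly (1/2) P x"]
    by simp
qed (simp add: gauss_poly_def)

lemma moment_bound_poly_partial: "moment_bound k (poly_partial i P) \<le> moment_bound (k + 1) P"
proof (induction P)
  case (Cons m P)
  obtain c \<mu> where m: "m = (c, \<mu>)"
    by fastforce
  have "real (\<mu> i) * sqrt_pow_self (mlen (\<mu>(i := \<mu> i - 1)) + k) \<le> sqrt_pow_self (mlen \<mu> + (k + 1))"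
  proof (cases "\<mu> i = 0")
    case False
    then have "mlen (\<mu>(i := \<mu> i - 1)) + 1 = mlen \<mu>"
      using mlen_fun_upd[of \<mu> i "\<mu> i - 1"] by simp
    then show ?thesis
      using of_nat_mult_sqrt_pow_self_le[of "\<mu> i" "mlen (\<mu>(i := \<mu> i - 1)) + k"]
        component_le_mlen[of \<mu> i] by (simp add: algebra_simps)
  qed (simp add: sqrt_pow_self_nonneg)
  then have "\<bar>c * real (\<mu> i)\<bar> * sqrt_pow_self (mlen (\<mu>(i := \<mu> i - 1)) + k)
      \<le> \<bar>c\<bar> * sqrt_pow_self (mlen \<mu> + (k + 1))"
    by (simp add: abs_mult mult.assoc mult_left_mono)
  with Cons show ?case
    by (simp add: poly_partial_def m)
qed (simp add: poly_partial_def)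

lemma moment_bound_poly_mult_coord: "moment_bound k (poly_mult_coord i P) = moment_bound (k + 1) P"
proof -
  have "mlen (\<mu>(i := \<mu> i + 1)) = mlen \<mu> + 1" for \<mu> :: "'a \<Rightarrow> nat"
    using mlen_fun_upd[of \<mu> i "\<mu> i + 1"] by simp
  then show ?thesis
    by (induction P) (simp_all add: poly_mult_coord_def)
qed

lemma moment_bound_iterated_gauss_poly_partial:
  "moment_bound k (foldr (gauss_poly_partial (1/2)) xs P) \<le> 2 ^ length xs * moment_bound (k + length xs) P"
proof (induction xs arbitrary: k)
  case (Cons i xs)
  have "moment_bound k (foldr (gauss_poly_partial (1/2)) (i # xs) P)
      \<le> 2 * moment_bound (k + 1) (foldr (gauss_poly_partial (1/2)) xs P)"
    using moment_bound_poly_partial[of k i]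
    by (simp add: gauss_poly_partial_def moment_bound_append moment_bound_scale moment_bound_poly_mult_coord)
  also have "\<dots> \<le> 2 * (2 ^ length xs * moment_bound (k + 1 + length xs) P)"
    using Cons[of "k + 1"] by simp
  finally show ?case
    by (simp add: algebra_simps)
qed simp

lemma moment_bound_le: "moment_bound k P \<le> coeff_l1 P * sqrt_pow_self (poly_degree P + k)"
proof -
  have "moment_bound k P \<le> (\<Sum>m\<leftarrow>P. \<bar>fst m\<bar> * sqrt_pow_self (poly_degree P + k))"
    unfolding moment_bound_def
    by (intro sum_list_mono mult_left_mono sqrt_pow_self_mono) (auto simp: poly_degree_def)
  then show ?thesis
    by (simp add: coeff_l1_def sum_list_mult_const)
qed

lemma coeff_l1_nonneg: "coeff_l1 P \<ge> 0"
  by (induction P) (simp_all add: coeff_l1_def)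

lemma abs_mpow_mult_mpartial_gauss_poly_le:
  "\<bar>mpow x \<alpha> * mpartial \<beta> (gauss_poly (1/2) P) x\<bar>
     \<le> coeff_l1 P * (2 ^ (mlen \<alpha> + mlen \<beta>) * sqrt_pow_self (poly_degree P + (mlen \<alpha> + mlen \<beta>)))"
proof -
  obtain xs where xs: "length xs = mlen \<beta>" "mpartial \<beta> = iter_partial xs"
    by (rule mpartial_eq_iter_partial)
  have "\<bar>mpow x \<alpha> * mpartial \<beta> (gauss_poly (1/2) P) x\<bar>
      \<le> moment_bound (mlen \<alpha>) (foldr (gauss_poly_partial (1/2)) xs P)"
    using abs_mpow_mult_gauss_poly_le by (simp add: xs iter_partial_gauss_poly)
  also have "\<dots> \<le> 2 ^ mlen \<beta> * moment_bound (mlen \<alpha> + mlen \<beta>) P"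
    using moment_bound_iterated_gauss_poly_partial xs(1) by metis
  also have "\<dots> \<le> 2 ^ mlen \<beta> * (coeff_l1 P * sqrt_pow_self (poly_degree P + (mlen \<alpha> + mlen \<beta>)))"
    by (intro mult_left_mono moment_bound_le) simp
  also have "\<dots> \<le> 2 ^ (mlen \<alpha> + mlen \<beta>) * (coeff_l1 P * sqrt_pow_self (poly_degree P + (mlen \<alpha> + mlen \<beta>)))"
    by (intro mult_right_mono power_increasing)
      (auto intro: mult_nonneg_nonneg coeff_l1_nonneg sqrt_pow_self_nonneg)
  finally show ?thesis
    by (simp add: algebra_simps)
qed

lemma sqrt_pow_self_le_pow2:
  "sqrt_pow_self (D + n) \<le> sqrt (real (D + n + 1)) ^ n * (2 ^ (D + 1)) ^ (D + n + 1)"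
proof -
  define N where "N = D + n + 1"
  define \<rho> where "\<rho> = sqrt (real N)"
  have "\<rho> \<le> real N"
    using real_sqrt_le_mono[of "real N" "real N * real N"] by (simp add: \<rho>_def N_def)
  also have "\<dots> \<le> 2 ^ N"
    by (simp add: less_imp_le less_exp)
  finally have "\<rho> ^ (D + 1) \<le> (2 ^ N) ^ (D + 1)"
    by (rule power_mono) (simp add: \<rho>_def)
  have "sqrt_pow_self (D + n) \<le> sqrt_pow_self N"
    by (rule sqrt_pow_self_mono) (simp add: N_def)
  also have "\<dots> = \<rho> ^ n * \<rho> ^ (D + 1)"
    unfolding sqrt_pow_self_def \<rho>_def real_sqrt_power by (simp add: N_def power_add mult_ac)
  also have "\<dots> \<le> \<rho> ^ n * (2 ^ N) ^ (D + 1)"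
    using \<open>\<rho> ^ (D + 1) \<le> (2 ^ N) ^ (D + 1)\<close> by (simp add: \<rho>_def mult_left_mono)
  also have "(2 ^ N) ^ (D + 1) = (2 ^ (D + 1) :: real) ^ N"
    unfolding power_mult[symmetric] by (simp only: mult.commute)
  finally show ?thesis
    unfolding \<rho>_def N_def .
qed

lemma pow2_mult_sqrt_pow_self_le:
  fixes \<kappa> :: real and D n :: nat
  assumes "\<kappa> * (3 * 2 ^ (D + 2))\<^sup>2 \<le> 1"
  defines "r \<equiv> 3 * 2 ^ (D + 2) * sqrt (real (D + n + 1))"
  shows "2 ^ n * sqrt_pow_self (D + n) \<le> (3 * 2 ^ (D + 1)) ^ (D + 1) * r ^ n * exp (- \<kappa> * r\<^sup>2)"
proof -
  define N where "N = D + n + 1"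
  define \<rho> where "\<rho> = sqrt (real N)"
  have r_eq: "r = 2 * (3 * 2 ^ (D + 1)) * \<rho>"
    by (simp add: r_def \<rho>_def N_def)
  have "1 \<le> 3 ^ N * exp (- real N)"
    using power_mono[OF exp_le, of N] by (simp add: exp_minus field_simps flip: exp_of_nat_mult)
  have "\<kappa> * r\<^sup>2 = \<kappa> * (3 * 2 ^ (D + 2))\<^sup>2 * real N"
    by (simp add: r_def N_def power_mult_distrib)
  also have "\<dots> \<le> real N"
    using mult_right_mono[OF assms(1), of "real N"] by simp
  finally have "exp (- real N) \<le> exp (- \<kappa> * r\<^sup>2)"
    by simp
  have "2 ^ n * sqrt_pow_self (D + n) \<le> 2 ^ n * \<rho> ^ n * (2 ^ (D + 1)) ^ N"
    using sqrt_pow_self_le_pow2[of D n] by (simp add: \<rho>_def N_def mult.assoc)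
  also have "\<dots> \<le> 2 ^ n * \<rho> ^ n * (2 ^ (D + 1)) ^ N * (3 ^ N * exp (- real N))"
    using mult_left_mono[OF \<open>1 \<le> 3 ^ N * exp (- real N)\<close>, of "2 ^ n * \<rho> ^ n * (2 ^ (D + 1)) ^ N"]
    by (simp add: \<rho>_def)
  also have "\<dots> = (3 * 2 ^ (D + 1)) ^ (D + 1) * r ^ n * exp (- real N)"
    unfolding r_eq by (simp only: N_def power_add power_mult_distrib power_one_right mult_ac)
  also have "\<dots> \<le> (3 * 2 ^ (D + 1)) ^ (D + 1) * r ^ n * exp (- \<kappa> * r\<^sup>2)"
    using \<open>exp (- real N) \<le> exp (- \<kappa> * r\<^sup>2)\<close> by (intro mult_left_mono) (simp_all add: r_def)
  finally show ?thesis .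
qed

lemma weight_function_nonneg: "weight_function \<omega> \<Longrightarrow> t \<ge> 0 \<Longrightarrow> \<omega> t \<ge> 0"
  unfolding weight_function_def by blast

lemma weight_function_mono: "weight_function \<omega> \<Longrightarrow> 0 \<le> s \<Longrightarrow> s \<le> t \<Longrightarrow> \<omega> s \<le> \<omega> t"
  unfolding weight_function_def by (auto elim: mono_onD)

lemma le_phi_star:
  assumes \<omega>: "weight_function \<omega>" and "s \<ge> 0" "t \<ge> 0"
  shows "t * s - \<omega> (exp t) \<le> phi_star \<omega> s"
proof -
  have "(\<lambda>x. ln x) \<in> o[at_top](\<omega>)"
    using \<omega> by (simp add: weight_function_def)
  then have "\<forall>\<^sub>F x in at_top. norm (ln x) \<le> 1 / (s + 1) * norm (\<omega> x)"
    by (rule landau_o.smallD) (use \<open>s \<ge> 0\<close> in simp)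
  then have "\<forall>\<^sub>F t in at_top. norm (ln (exp t)) \<le> 1 / (s + 1) * norm (\<omega> (exp t))"
    using exp_at_top by (rule eventually_compose_filterlim)
  then obtain T where T: "\<And>t. t \<ge> T \<Longrightarrow> \<bar>t\<bar> \<le> \<bar>\<omega> (exp t)\<bar> / (s + 1)"
    by (auto simp: eventually_at_top_linorder)
  have "t * s - \<omega> (exp t) \<le> \<bar>T\<bar> * s" if "t \<ge> 0" for t
  proof (cases "t \<ge> T")
    case True
    then have "t * (s + 1) \<le> \<omega> (exp t)"
      using T[of t] \<open>t \<ge> 0\<close> \<open>s \<ge> 0\<close> weight_function_nonneg[OF \<omega>, of "exp t"]
      by (simp add: field_simps)
    moreover have "0 \<le> s * \<bar>T\<bar>"
      using \<open>s \<ge> 0\<close> by simp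
    ultimately show ?thesis
      using \<open>t \<ge> 0\<close> by (simp add: algebra_simps)
  next
    case False
    then have "t * s \<le> \<bar>T\<bar> * s"
      using \<open>s \<ge> 0\<close> by (intro mult_right_mono) auto
    then show ?thesis
      using weight_function_nonneg[OF \<omega>, of "exp t"] by simp
  qed
  then have "bdd_above ((\<lambda>t. t * s - \<omega> (exp t)) ` {0..})"
    by (intro bdd_aboveI2) auto
  then show ?thesis
    unfolding phi_star_def by (rule cSUP_upper[rotated]) (use \<open>t \<ge> 0\<close> in simp)
qed

lemma weight_function_le_quadratic:
  assumes \<omega>: "weight_function \<omega>" and "c \<ge> 0"
    and "\<forall>\<^sub>F t in at_top. norm (\<omega> t) \<le> c * norm (t\<^sup>2)"
  obtains K where "\<And>t. t \<ge> 0 \<Longrightarrow> \<omega> t \<le> c * t\<^sup>2 + K"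
proof -
  obtain T where T: "\<And>t. t \<ge> T \<Longrightarrow> norm (\<omega> t) \<le> c * norm (t\<^sup>2)"
    using assms(3) by (auto simp: eventually_at_top_linorder)
  have "\<omega> t \<le> c * t\<^sup>2 + \<omega> (max T 0)" if "t \<ge> 0" for t
  proof (cases "t \<le> max T 0")
    case True
    then show ?thesis
      using weight_function_mono[OF \<omega> \<open>t \<ge> 0\<close>] \<open>c \<ge> 0\<close> by (simp add: add_increasing)
  next
    case False
    then have "\<omega> t \<le> c * t\<^sup>2"
      using T[of t] by (simp add: abs_le_iff)
    then show ?thesis
      using weight_function_nonneg[OF \<omega>, of "max T 0"] by simp
  qed
  then show ?thesis
    by (rule that)
qed

lemma Wseq_lower_bound:
  assumes \<omega>: "weight_function \<omega>" and bound: "\<And>t. t \<ge> 0 \<Longrightarrow> \<omega> t \<le> K * t\<^sup>2 + K'"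
    and "lam > 0" and "r \<ge> 1"
  shows "r ^ mlen \<alpha> * exp (- (K / lam) * r\<^sup>2) * exp (- K' / lam) \<le> Wseq \<omega> lam \<alpha>"
proof -
  have "ln r * (lam * mlen \<alpha>) - \<omega> (exp (ln r)) \<le> phi_star \<omega> (lam * mlen \<alpha>)"
    using assms by (intro le_phi_star) auto
  then have "lam * (mlen \<alpha> * ln r) - (K * r\<^sup>2 + K') \<le> phi_star \<omega> (lam * mlen \<alpha>)"
    using bound[of r] \<open>r \<ge> 1\<close> by (simp add: algebra_simps)
  then have "(lam * (mlen \<alpha> * ln r) - (K * r\<^sup>2 + K')) / lam \<le> phi_star \<omega> (lam * mlen \<alpha>) / lam"
    using \<open>lam > 0\<close> by (rule divide_right_mono[OF _ less_imp_le])
  then have "mlen \<alpha> * ln r - (K / lam) * r\<^sup>2 - K' / lam \<le> (1 / lam) * phi_star \<omega> (lam * mlen \<alpha>)"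
    using \<open>lam > 0\<close> by (simp add: diff_divide_distrib add_divide_distrib)
  then have "exp (mlen \<alpha> * ln r - (K / lam) * r\<^sup>2 - K' / lam) \<le> Wseq \<omega> lam \<alpha>"
    by (simp add: Wseq_def)
  moreover have "r ^ mlen \<alpha> = exp (mlen \<alpha> * ln r)"
    using \<open>r \<ge> 1\<close> by (simp add: exp_of_nat_mult)
  ultimately show ?thesis
    by (simp add: exp_diff exp_minus divide_inverse)
qed

lemma W_norm_finite_gauss_poly:
  assumes \<omega>: "weight_function \<omega>" and "lam > 0"
    and small: "\<forall>\<^sub>F t in at_top. norm (\<omega> t) \<le> lam / (3 * 2 ^ (poly_degree P + 2))\<^sup>2 * norm (t\<^sup>2)"
  shows "W_norm_finite \<omega> lam (gauss_poly (1/2) P)"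
proof -
  define D where "D = poly_degree P"
  define Q :: real where "Q = 3 * 2 ^ (D + 2)"
  have "lam / Q\<^sup>2 \<ge> 0"
    using \<open>lam > 0\<close> by simp
  then obtain K where K: "\<And>t. t \<ge> 0 \<Longrightarrow> \<omega> t \<le> lam / Q\<^sup>2 * t\<^sup>2 + K"
    using weight_function_le_quadratic[OF \<omega> _ small[folded D_def, folded Q_def]] by blast
  define C where "C = coeff_l1 P * (3 * 2 ^ (D + 1)) ^ (D + 1) * exp (K / lam)"
  show ?thesis
    unfolding W_norm_finite_def
  proof (intro exI allI)
    fix \<alpha> \<beta> :: "'a \<Rightarrow> nat" and x :: "real^'a"
    define n where "n = mlen \<alpha> + mlen \<beta>"
    define r where "r = Q * sqrt (real (D + n + 1))"
    have "1 \<le> Q"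
      unfolding Q_def using one_le_power[of "2::real" "D + 2"] by linarith
    moreover have "1 \<le> sqrt (real (D + n + 1))"
      by simp
    ultimately have "1 * 1 \<le> r"
      unfolding r_def by (intro mult_mono) auto
    then have "r \<ge> 1"
      by simp
    have "\<bar>mpow x \<alpha> * mpartial \<beta> (gauss_poly (1/2) P) x\<bar> \<le> coeff_l1 P * (2 ^ n * sqrt_pow_self (D + n))"
      unfolding n_def D_def by (rule abs_mpow_mult_mpartial_gauss_poly_le)
    also have "\<dots> \<le> coeff_l1 P * ((3 * 2 ^ (D + 1)) ^ (D + 1) * r ^ n * exp (- (lam / Q\<^sup>2 / lam) * r\<^sup>2))"
      using \<open>lam > 0\<close> unfolding r_def Q_def
      by (intro mult_left_mono pow2_mult_sqrt_pow_self_le coeff_l1_nonneg) simp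
    also have "\<dots> = C * (r ^ n * exp (- (lam / Q\<^sup>2 / lam) * r\<^sup>2) * exp (- K / lam))"
      using exp_minus_inverse[of "K / lam"] by (simp add: C_def)
    also have "\<dots> \<le> C * Wseq \<omega> lam (\<lambda>i. \<alpha> i + \<beta> i)"
      using Wseq_lower_bound[OF \<omega> K \<open>lam > 0\<close> \<open>r \<ge> 1\<close>, of "\<lambda>i. \<alpha> i + \<beta> i"]
      by (intro mult_left_mono) (simp_all add: C_def n_def mlen_add coeff_l1_nonneg)
    finally show "\<bar>mpow x \<alpha> * mpartial \<beta> (gauss_poly (1/2) P) x\<bar> \<le> C * Wseq \<omega> lam (\<lambda>i. \<alpha> i + \<beta> i)" .
  qed
qed

section \<open>The converse\<close>

lemma convex_on_supporting_line:
  fixes f :: "real \<Rightarrow> real"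
  assumes f: "convex_on {a..} f" and "a < x"
  obtains s where "\<And>t. t \<ge> a \<Longrightarrow> f x + s * (t - x) \<le> f t"
proof -
  let ?slope = "\<lambda>y. (f y - f x) / (y - x)"
  have left_le_right: "?slope y \<le> ?slope t" if "a \<le> y" "y < x" "x < t" for y t
  proof -
    have "?slope y \<le> (f y - f t) / (y - t)"
      using convex_on_slope_le(1)[OF f, of y t x] that by simp
    also have "\<dots> \<le> (f x - f t) / (x - t)"
      using convex_on_slope_le(2)[OF f, of y t x] that by simp
    also have "\<dots> = ?slope t"
      by (metis minus_diff_eq minus_divide_divide)
    finally show ?thesis .
  qed
  define s where "s = Sup (?slope ` {a..<x})"
  have bdd: "bdd_above (?slope ` {a..<x})"
    using left_le_right[where t = "x + 1"] by (intro bdd_aboveI2) auto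
  have "f x + s * (t - x) \<le> f t" if "t \<ge> a" for t
  proof (cases t x rule: linorder_cases)
    case less
    then have "?slope t \<le> s"
      unfolding s_def using \<open>t \<ge> a\<close> by (intro cSup_upper bdd) auto
    then show ?thesis
      using less by (simp add: neg_divide_le_eq mult.commute)
  next
    case greater
    then have "s \<le> ?slope t"
      unfolding s_def using \<open>a < x\<close> by (intro cSup_least) (auto intro: left_le_right)
    then show ?thesis
      using greater by (simp add: le_divide_eq mult.commute)
  qed simp
  then show ?thesis
    by (rule that)
qed

lemma phi_star_le_of_supporting_line:
  assumes line: "\<And>t. t \<ge> 0 \<Longrightarrow> \<omega> (exp T) + s * (t - T) \<le> \<omega> (exp t)"
    and "0 \<le> \<sigma>" "\<sigma> \<le> s"
  shows "phi_star \<omega> \<sigma> \<le> s * T - \<omega> (exp T)"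
  unfolding phi_star_def
proof (rule cSUP_least)
  fix t :: real
  assume "t \<in> {0..}"
  then have "t * \<sigma> \<le> t * s"
    using \<open>\<sigma> \<le> s\<close> by (simp add: mult_left_mono)
  then show "t * \<sigma> - \<omega> (exp t) \<le> s * T - \<omega> (exp T)"
    using line[of t] \<open>t \<in> {0..}\<close> by (simp add: algebra_simps)
qed simp

lemma nat_multiple_le_le_Suc:
  fixes s lam :: real
  assumes "s \<ge> 0" and "lam > 0"
  obtains n :: nat where "lam * n \<le> s" and "s \<le> lam * (n + 1)"
proof -
  define n where "n = nat \<lfloor>s / lam\<rfloor>"
  have "real n = \<lfloor>s / lam\<rfloor>"
    using assms by (simp add: n_def)
  then have "real n \<le> s / lam" and "s / lam \<le> real n + 1"
    using of_int_floor_le[of "s / lam"] real_of_int_floor_add_one_ge[of "s / lam"] by linarith+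
  then show ?thesis
    using assms by (intro that[of n]) (simp_all add: field_simps)
qed

lemma ln_of_moment_bound:
  fixes c u lam C p :: real
  assumes "c > 0" "u > 0" "lam > 0"
    and "c * u ^ n * exp (- u\<^sup>2 / 2) \<le> C * exp (p / lam)"
  shows "lam * (ln c + n * ln u - u\<^sup>2 / 2) \<le> lam * ln C + p"
proof -
  have pos: "0 < c * u ^ n * exp (- u\<^sup>2 / 2)"
    using assms by simp
  then have "0 < C * exp (p / lam)"
    using assms(4) by linarith
  then have "C > 0"
    by (simp add: zero_less_mult_iff)
  have "ln (c * u ^ n * exp (- u\<^sup>2 / 2)) \<le> ln (C * exp (p / lam))"
    using assms(4) pos by (rule ln_mono)
  then have "ln c + n * ln u - u\<^sup>2 / 2 \<le> ln C + p / lam"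
    using assms \<open>C > 0\<close> by (simp add: ln_mult ln_realpow)
  then show ?thesis
    using \<open>lam > 0\<close> by (simp add: field_simps)
qed

lemma weight_function_le_of_moment_bounds:
  fixes lam c u C :: real
  assumes \<omega>: "weight_function \<omega>" and "lam > 0" "c > 0" "u > 1"
    and moments: "\<And>n::nat. c * u ^ n * exp (- u\<^sup>2 / 2) \<le> C * exp (phi_star \<omega> (lam * n) / lam)"
  shows "\<omega> u \<le> lam * (u\<^sup>2 / 2 + ln u + ln C - ln c)"
proof -
  define T where "T = ln u"
  have "T > 0"
    using \<open>u > 1\<close> by (simp add: T_def)
  have "convex_on {0..} (\<lambda>t. \<omega> (exp t))"
    using \<omega> by (simp add: weight_function_def)
  then obtain s where line: "\<And>t. t \<ge> 0 \<Longrightarrow> \<omega> (exp T) + s * (t - T) \<le> \<omega> (exp t)"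
    using convex_on_supporting_line \<open>T > 0\<close> by blast
  have "s * T \<ge> 0"
    using line[of 0] weight_function_mono[OF \<omega>, of 1 "exp T"] \<open>T > 0\<close> by simp
  then have "s \<ge> 0"
    using \<open>T > 0\<close> by (simp add: zero_le_mult_iff)
  obtain n :: nat where "lam * n \<le> s" and "s \<le> lam * (n + 1)"
    using nat_multiple_le_le_Suc[OF \<open>s \<ge> 0\<close> \<open>lam > 0\<close>] by blast
  have phi: "phi_star \<omega> (lam * n) \<le> s * T - \<omega> u"
    using phi_star_le_of_supporting_line[OF line _ \<open>lam * n \<le> s\<close>] \<open>lam > 0\<close> \<open>u > 1\<close>
    by (simp add: T_def)
  have "lam * (ln c + n * T - u\<^sup>2 / 2) \<le> lam * ln C + phi_star \<omega> (lam * n)"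
    using ln_of_moment_bound[OF \<open>c > 0\<close> _ \<open>lam > 0\<close> moments[of n]] \<open>u > 1\<close> by (simp add: T_def)
  moreover have "s * T \<le> lam * (n + 1) * T"
    using \<open>s \<le> lam * (n + 1)\<close> \<open>T > 0\<close> by (simp add: mult_right_mono)
  ultimately have "\<omega> u \<le> lam * (n + 1) * T - lam * (ln c + n * T - u\<^sup>2 / 2) + lam * ln C"
    using phi by linarith
  then show ?thesis
    by (simp add: T_def algebra_simps)
qed

lemma gaussian_moment_le_Wseq:
  fixes f :: "real^'n::finite \<Rightarrow> real" and u :: real
  assumes minorant: "\<And>x. c * exp (- (norm x)\<^sup>2 / 2) \<le> \<bar>f x\<bar>"
    and bound: "\<And>\<alpha> \<beta> x. \<bar>mpow x \<alpha> * mpartial \<beta> f x\<bar> \<le> C * Wseq \<omega> lam (\<lambda>i. \<alpha> i + \<beta> i)"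
    and "u \<ge> 0"
  shows "c * u ^ n * exp (- u\<^sup>2 / 2) \<le> C * exp (phi_star \<omega> (lam * n) / lam)"
proof -
  fix i :: 'n
  define \<alpha> :: "'n \<Rightarrow> nat" where "\<alpha> = (\<lambda>j. if j = i then n else 0)"
  have "axis i u = u *\<^sub>R axis i 1"
    by (simp add: vec_eq_iff axis_def)
  then have "norm (axis i u) = u"
    using \<open>u \<ge> 0\<close> by simp
  then have "c * u ^ n * exp (- u\<^sup>2 / 2) \<le> \<bar>mpow (axis i u) \<alpha> * f (axis i u)\<bar>"
    using mult_left_mono[OF minorant[of "axis i u"], of "u ^ n"] \<open>u \<ge> 0\<close>
    by (simp add: \<alpha>_def mpow_axis_single abs_mult mult_ac)
  also have "\<dots> \<le> C * Wseq \<omega> lam \<alpha>"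
    using bound[of "axis i u" \<alpha> "\<lambda>_. 0"] by simp
  finally show ?thesis
    by (simp add: Wseq_def mlen_def \<alpha>_def)
qed

lemma small_o_square_if_W_norm_finite_gaussian_minorant:
  fixes f :: "real^'n::finite \<Rightarrow> real"
  assumes \<omega>: "weight_function \<omega>" and "c > 0"
    and minorant: "\<And>x. c * exp (- (norm x)\<^sup>2 / 2) \<le> \<bar>f x\<bar>"
    and f: "\<forall>lam>0. W_norm_finite \<omega> lam f"
  shows "\<omega> \<in> o[at_top](\<lambda>t. t\<^sup>2)"
proof (rule landau_o.smallI)
  fix \<epsilon> :: real
  assume "\<epsilon> > 0"
  define lam where "lam = \<epsilon> / 4"
  have "lam > 0"
    using \<open>\<epsilon> > 0\<close> by (simp add: lam_def)
  then obtain C where C: "\<And>\<alpha> \<beta> x. \<bar>mpow x \<alpha> * mpartial \<beta> f x\<bar> \<le> C * Wseq \<omega> lam (\<lambda>i. \<alpha> i + \<beta> i)"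
    using f unfolding W_norm_finite_def by blast
  show "\<forall>\<^sub>F u in at_top. norm (\<omega> u) \<le> \<epsilon> * norm (u\<^sup>2)"
    using eventually_ge_at_top[of "max 2 (\<bar>ln C - ln c\<bar> + 1)"]
  proof eventually_elim
    case (elim u)
    then have "u > 1"
      by simp
    then have "\<omega> u \<le> lam * (u\<^sup>2 / 2 + ln u + ln C - ln c)"
      using gaussian_moment_le_Wseq[OF minorant C]
      by (intro weight_function_le_of_moment_bounds[OF \<omega> \<open>lam > 0\<close> \<open>c > 0\<close>]) auto
    also have "\<dots> \<le> lam * (4 * u\<^sup>2)"
    proof -
      have "ln u \<le> u" and "u \<le> u\<^sup>2"
        using ln_le_minus_one[of u] \<open>u > 1\<close> by (simp_all add: power2_eq_square)
      then show ?thesis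
        using elim \<open>lam > 0\<close> by (intro mult_left_mono) auto
    qed
    finally show ?case
      using weight_function_nonneg[OF \<omega>, of u] \<open>u > 1\<close> by (simp add: lam_def)
  qed
qed

lemma gauss_poly_in_S_roumieu:
  assumes \<omega>: "weight_function \<omega>"
  shows "gauss_poly (1/2) P \<in> S_roumieu \<omega>"
proof -
  define Q :: real where "Q = (3 * 2 ^ (poly_degree P + 2))\<^sup>2"
  have "\<omega> \<in> O[at_top](\<lambda>t. t\<^sup>2)"
    using \<omega> by (simp add: weight_function_def)
  then obtain c where "c > 0" and c: "\<forall>\<^sub>F t in at_top. norm (\<omega> t) \<le> c * norm (t\<^sup>2)"
    by (rule landau_o.bigE)
  have "c * Q > 0"
    using \<open>c > 0\<close> by (simp add: Q_def)
  moreover from c have "\<forall>\<^sub>F t in at_top. norm (\<omega> t) \<le> c * Q / Q * norm (t\<^sup>2)"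
    by (simp add: Q_def)
  ultimately have "W_norm_finite \<omega> (c * Q) (gauss_poly (1/2) P)"
    by (intro W_norm_finite_gauss_poly[OF \<omega>]) (simp_all add: Q_def)
  with \<open>c * Q > 0\<close> show ?thesis
    by (auto simp: S_roumieu_def smooth_gauss_poly)
qed

lemma gauss_poly_in_S_beurling:
  assumes \<omega>: "weight_function \<omega>" and small: "\<omega> \<in> o[at_top](\<lambda>t. t\<^sup>2)"
  shows "gauss_poly (1/2) P \<in> S_beurling \<omega>"
proof -
  have "W_norm_finite \<omega> lam (gauss_poly (1/2) P)" if "lam > 0" for lam
    using \<omega> that landau_o.smallD[OF small, of "lam / (3 * 2 ^ (poly_degree P + 2))\<^sup>2"]
    by (intro W_norm_finite_gauss_poly) simp_all
  then show ?thesis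
    by (simp add: S_beurling_def smooth_gauss_poly)
qed

theorem corollary6p7:
  fixes \<omega> :: "real \<Rightarrow> real"
  assumes "weight_function \<omega>"
  shows "((\<forall>\<gamma>::'n::finite \<Rightarrow> nat. hermite_fun \<gamma> \<in> S_roumieu \<omega>) \<longleftrightarrow> \<omega> \<in> O[at_top](\<lambda>t. t\<^sup>2))
       \<and> ((\<forall>\<gamma>::'n::finite \<Rightarrow> nat. hermite_fun \<gamma> \<in> S_beurling \<omega>) \<longleftrightarrow> \<omega> \<in> o[at_top](\<lambda>t. t\<^sup>2))"
proof -
  have roumieu: "hermite_fun \<gamma> \<in> S_roumieu \<omega>" for \<gamma> :: "'n \<Rightarrow> nat"
    using hermite_fun_eq_gauss_poly[of \<gamma>] gauss_poly_in_S_roumieu[OF assms] by auto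
  have beurling: "hermite_fun \<gamma> \<in> S_beurling \<omega>" if "\<omega> \<in> o[at_top](\<lambda>t. t\<^sup>2)" for \<gamma> :: "'n \<Rightarrow> nat"
    using hermite_fun_eq_gauss_poly[of \<gamma>] gauss_poly_in_S_beurling[OF assms that] by auto
  have "\<omega> \<in> o[at_top](\<lambda>t. t\<^sup>2)" if "hermite_fun (\<lambda>_::'n. 0) \<in> S_beurling \<omega>"
  proof (rule small_o_square_if_W_norm_finite_gaussian_minorant[OF assms])
    show "pi powr (- real CARD('n) / 4) > 0"
      by simp
    show "pi powr (- real CARD('n) / 4) * exp (- (norm x)\<^sup>2 / 2) \<le> \<bar>hermite_fun (\<lambda>_::'n. 0) x\<bar>"
      for x :: "real^'n"
      by (simp add: hermite_fun_zero)
    show "\<forall>lam>0. W_norm_finite \<omega> lam (hermite_fun (\<lambda>_::'n. 0))"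
      using that by (simp add: S_beurling_def)
  qed
  moreover have "\<omega> \<in> O[at_top](\<lambda>t. t\<^sup>2)"
    using assms by (simp add: weight_function_def)
  ultimately show ?thesis
    using roumieu beurling by blast
qed

end
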